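(* Let $g = 9.8$ and for $d \ge -\frac{(0.48g)^2}{0.8g}$ let $U(d) = 0.48g - \sqrt{(0.48g)^2 + 0.8 g d}$, so that for $d_0\ge 0$, $U'(d_0) = -\frac{0.4g}{\sqrt{(0.48g)^2+0.8gd_0}}$. Fix $\epsilon > 0$ and $d_0 \ge 0$. Define the surrogate red constraints on a pair $(d,v)\in\mathbb{R}^2$ by $$ v \le -\epsilon, \qquad v \le U'(d_0)(d - d_0) + U(d_0) - \epsilon. $$ Then: (i) (Tightness) every pair $(d,v)\in\mathbb{R}^2$ satisfying both surrogate constraints satisfies the red condition, i.e. $v<0$ and $d \le -1.2v + \frac{v^2}{0.8g}$; equivalently, $F(x) = \text{red}$ for every state $x$ whose driving-direction distance and velocity components are $(d,v)$. (ii) (Convexity) Consider the attack optimization in the context below in which the desired light is red at every step of the attack interval. If, for every $t$ in the attack interval, the constraint $F(\tilde x_t) = \text{red}$ is replaced by the two surrogate constraints applied to $(d,v) = (\tilde d_t^{1}, \tilde v_t^{1})$, the driving-direction distance and velocity components of $\tilde x_t$, then the resulting optimization problem in the variables $\{\delta_t\}_{t\in\mathcal{T}^a}$ is a convex optimization problem.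
   Context: FCW alert logic. For a state $x = (d^1, v^1, a^1, d^2, v^2, a^2)\in\mathbb{R}^6$ (distance, velocity, acceleration of the tracked object in the driving direction, then the same in the lateral direction), with safe distance $d^*(v) = -1.2v + v^2/(0.8g)$, $g=9.8$, the warning light is $F(x)=\text{green}$ if $v^1\ge 0$; $F(x)=\text{yellow}$ if $v^1<0$ and $d^1 > d^*(v^1)$; $F(x)=\text{red}$ if $v^1<0$ and $d^1\le d^*(v^1)$. Attack optimization. Fixed data: a state-transition matrix $A\in\mathbb{R}^{6\times 6}$, a measurement matrix $C\in\mathbb{R}^{8\times 6}$, Kalman gain matrices $H_{t}\in\mathbb{R}^{6\times 8}$ (computed independently of measurements), a finite interval of integer time steps $\mathcal{T}^a = \{t_0, \dots, t_1\}$, a fixed initial prediction $\tilde x_{t_0-1}\in\mathbb{R}^6$, measurements $y_t \in \mathbb{R}^8$ for $t\in\mathcal{T}^a$ (components 1–4 are vision measurements of driving-direction distance, driving-direction velocity, lateral distance, lateral velocity; components 5–8 the same from radar), a positive definite matrix $R\in\mathbb{R}^{8\times 8}$, and a bound $\Delta\in(0,\infty]$. The decision variables are $\delta_t\in\mathbb{R}^8$, $t\in\mathcal{T}^a$. The problem is: minimize $\sum_{t\in\mathcal{T}^a}\delta_t^\top R\delta_t$ subject to, for all $t\in\mathcal{T}^a$: $\tilde y_t = y_t + \delta_t$; $\tilde x_t = A(I - H_{t-1}C)\tilde x_{t-1} + A H_{t-1}\tilde y_t$; $\delta_t^i = 0$ for $i\in\{5,6,7,8\}$; $\|\delta_t\|_\infty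 \le \Delta$; the first component of $\tilde y_t$ lies in $[0,75]$ and the second in $[-30,30]$; and $F(\tilde x_t) = \text{red}$. *)

theory Defs
  imports "HOL-Analysis.Analysis" "HOL-Library.Numeral_Type" "HOL-Library.Extended_Real"
begin

definition g :: real where "g = 9.8"

definition dstar :: "real \<Rightarrow> real" where
  "dstar v = -1.2 * v + v^2 / (0.8 * g)"

datatype light = Green | Yellow | Red

text \<open>States are vectors in real^6; component i (i = 1..6) is x $ i,
  i.e. x $ 1 = d^1, x $ 2 = v^1, x $ 3 = a^1, x $ 4 = d^2, x $ 5 = v^2, x $ 6 = a^2.\<close>
definition F :: "real^6 \<Rightarrow> light" where
  "F x = (if x $ 2 \<ge> 0 then Green
          else if x $ 1 > dstar (x $ 2) then Yellow else Red)"

definition U :: "real \<Rightarrow> real" where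
  "U d = 0.48 * g - sqrt ((0.48 * g)^2 + 0.8 * g * d)"

definition U' :: "real \<Rightarrow> real" where
  "U' d = - (0.4 * g) / sqrt ((0.48 * g)^2 + 0.8 * g * d)"

text \<open>Attacked state estimate: xs n is the prediction at time t0 - 1 + n.\<close>
primrec xs_nat :: "real^6^6 \<Rightarrow> real^6^8 \<Rightarrow> (int \<Rightarrow> real^8^6) \<Rightarrow> real^6 \<Rightarrow> int
                    \<Rightarrow> (int \<Rightarrow> real^8) \<Rightarrow> (int \<Rightarrow> real^8) \<Rightarrow> nat \<Rightarrow> real^6" where
  "xs_nat A C H x0 t0 y \<delta> 0 = x0"
| "xs_nat A C H x0 t0 y \<delta> (Suc n) =
     (A ** (mat 1 - H (t0 - 1 + int n) ** C)) *v xs_nat A C H x0 t0 y \<delta> n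
     + (A ** H (t0 - 1 + int n)) *v (y (t0 + int n) + \<delta> (t0 + int n))"

text \<open>tilde x_t for t \<ge> t0 - 1.\<close>
definition xtil :: "real^6^6 \<Rightarrow> real^6^8 \<Rightarrow> (int \<Rightarrow> real^8^6) \<Rightarrow> real^6 \<Rightarrow> int
                    \<Rightarrow> (int \<Rightarrow> real^8) \<Rightarrow> (int \<Rightarrow> real^8) \<Rightarrow> int \<Rightarrow> real^6" where
  "xtil A C H x0 t0 y \<delta> t = xs_nat A C H x0 t0 y \<delta> (nat (t - t0 + 1))"

definition cost :: "real^8^8 \<Rightarrow> int \<Rightarrow> int \<Rightarrow> (int \<Rightarrow> real^8) \<Rightarrow> real" where
  "cost R t0 t1 \<delta> = (\<Sum>t\<in>{t0..t1}. \<delta> t \<bullet> (R *v \<delta> t))"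

text \<open>Decision variables are delta_t, t in {t0..t1}; we represent
  them as a function on int that vanishes outside {t0..t1}.\<close>
definition surrogate_feasible ::
  "real^6^6 \<Rightarrow> real^6^8 \<Rightarrow> (int \<Rightarrow> real^8^6) \<Rightarrow> real^6 \<Rightarrow> int \<Rightarrow> int
    \<Rightarrow> (int \<Rightarrow> real^8) \<Rightarrow> ereal \<Rightarrow> real \<Rightarrow> real \<Rightarrow> (int \<Rightarrow> real^8) set" where
  "surrogate_feasible A C H x0 t0 t1 y \<Delta> \<epsilon> d0 =
     {\<delta>. (\<forall>t. t \<notin> {t0..t1} \<longrightarrow> \<delta> t = 0) \<and>
          (\<forall>t\<in>{t0..t1}.
             (\<forall>i\<in>{5,6,7,8::8}. \<delta> t $ i = 0) \<and>
             ereal (infnorm (\<delta> t)) \<le> \<Delta> \<and>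
             0 \<le> (y t + \<delta> t) $ 1 \<and> (y t + \<delta> t) $ 1 \<le> 75 \<and>
             -30 \<le> (y t + \<delta> t) $ 2 \<and> (y t + \<delta> t) $ 2 \<le> 30 \<and>
             (xtil A C H x0 t0 y \<delta> t) $ 2 \<le> - \<epsilon> \<and>
             (xtil A C H x0 t0 y \<delta> t) $ 2
                \<le> U' d0 * ((xtil A C H x0 t0 y \<delta> t) $ 1 - d0) + U d0 - \<epsilon>)}"

text \<open>Convexity notions for sets/functions of decision families (int => real^8),
  written out literally as in the definitions of convex and convex_on (the
  function space carries no real_vector instance in the library).\<close>
definition fam_comb :: "real \<Rightarrow> (int \<Rightarrow> real^8) \<Rightarrow> (int \<Rightarrow> real^8) \<Rightarrow> (int \<Rightarrow> real^8)" where
  "fam_comb u \<delta> \<delta>' = (\<lambda>t. u *\<^sub>R \<delta> t + (1 - u) *\<^sub>R \<delta>' t)"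

definition convex_fam :: "(int \<Rightarrow> real^8) set \<Rightarrow> bool" where
  "convex_fam S \<longleftrightarrow> (\<forall>\<delta>\<in>S. \<forall>\<delta>'\<in>S. \<forall>u::real. 0 \<le> u \<and> u \<le> 1 \<longrightarrow> fam_comb u \<delta> \<delta>' \<in> S)"

definition convex_on_fam :: "(int \<Rightarrow> real^8) set \<Rightarrow> ((int \<Rightarrow> real^8) \<Rightarrow> real) \<Rightarrow> bool" where
  "convex_on_fam S J \<longleftrightarrow> convex_fam S \<and>
     (\<forall>\<delta>\<in>S. \<forall>\<delta>'\<in>S. \<forall>u::real. 0 \<le> u \<and> u \<le> 1 \<longrightarrow>
        J (fam_comb u \<delta> \<delta>') \<le> u * J \<delta> + (1 - u) * J \<delta>')"

definition convex_problem :: "((int \<Rightarrow> real^8) \<Rightarrow> real) \<Rightarrow> (int \<Rightarrow> real^8) set \<Rightarrow> bool" where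
  "convex_problem J S \<longleftrightarrow> convex_on_fam UNIV J \<and> convex_fam S"

end

theory Submission
  imports Defs
begin

(* The red boundary d = dstar v, v < 0, is the graph of v = U d, so U' d0 = 1 / dstar' (U d0)
   and the second surrogate constraint cuts out, with margin \<epsilon>, the half-plane beyond the
   tangent of the parabola d = dstar v at (d0, U d0). As dstar is convex, that half-plane lies in
   the region d \<le> dstar v; the first constraint supplies v < 0.
   For convexity: the filter recursion makes the estimate x_t affine in the attack \<delta>, so each
   surrogate constraint is a half-space in \<delta>; the remaining constraints are a subspace, an
   \<infinity>-norm ball and boxes, and the cost is a sum of positive semidefinite quadratic forms. *)

definition dstar_deriv :: "real \<Rightarrow> real" where
  "dstar_deriv v = -1.2 + v / (0.4 * g)"

lemma dstar_tangent_le: "dstar v0 + dstar_deriv v0 * (v - v0) \<le> dstar v"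
proof -
  have "dstar v - (dstar v0 + dstar_deriv v0 * (v - v0)) = (v - v0)^2 / (0.8 * g)"
    by (simp add: dstar_def dstar_deriv_def g_def field_simps power2_eq_square)
  moreover have "0 \<le> (v - v0)^2 / (0.8 * g)"
    by (simp add: g_def)
  ultimately show ?thesis by linarith
qed

lemma dstar_U:
  assumes "0 \<le> (0.48 * g)^2 + 0.8 * g * d"
  shows "dstar (U d) = d"
proof -
  define s where "s = sqrt ((0.48 * g)^2 + 0.8 * g * d)"
  have "s * s = (0.48 * g)^2 + 0.8 * g * d"
    using assms by (simp add: s_def flip: power2_eq_square)
  then have "dstar (0.48 * g - s) = d"
    by (simp add: dstar_def g_def field_simps power2_eq_square)
  then show ?thesis
    by (simp add: U_def s_def)
qed

lemma dstar_deriv_U: "dstar_deriv (U d) = - sqrt ((0.48 * g)^2 + 0.8 * g * d) / (0.4 * g)"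
  by (simp add: dstar_deriv_def U_def g_def field_simps)

lemma U'_eq_inverse_dstar_deriv: "U' d = inverse (dstar_deriv (U d))"
  by (simp add: dstar_deriv_U U'_def)

lemma tangent_constraint_imp_le_dstar:
  assumes radicand: "0 < (0.48 * g)^2 + 0.8 * g * d0" and "0 \<le> \<epsilon>"
    and below: "v \<le> U' d0 * (d - d0) + U d0 - \<epsilon>"
  shows "d \<le> dstar v"
proof -
  define k where "k = dstar_deriv (U d0)"
  have "k < 0"
    using radicand by (simp add: k_def dstar_deriv_U g_def)
  have "v - U d0 \<le> (d - d0) / k"
    using below \<open>0 \<le> \<epsilon>\<close> by (simp add: U'_eq_inverse_dstar_deriv k_def divide_inverse mult.commute)
  then have "d - d0 \<le> k * (v - U d0)"
    using \<open>k < 0\<close> by (simp add: pos_le_divide_eq neg_le_divide_eq mult.commute)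
  also have "d0 + k * (v - U d0) \<le> dstar v"
    using dstar_tangent_le[of "U d0" v] dstar_U[of d0] radicand by (simp add: k_def)
  finally show ?thesis by linarith
qed

definition red_surrogate :: "real \<Rightarrow> real \<Rightarrow> (real \<times> real) set" where
  "red_surrogate \<epsilon> d0 = {(d, v). v \<le> - \<epsilon> \<and> v \<le> U' d0 * (d - d0) + U d0 - \<epsilon>}"

lemma red_surrogate_imp_red_region:
  assumes "0 < \<epsilon>" and radicand: "0 < (0.48 * g)^2 + 0.8 * g * d0"
    and "(d, v) \<in> red_surrogate \<epsilon> d0"
  shows "v < 0 \<and> d \<le> dstar v"
  using assms tangent_constraint_imp_le_dstar[OF radicand less_imp_le[OF \<open>0 < \<epsilon>\<close>]]
  by (auto simp: red_surrogate_def)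

lemma F_eq_Red_iff: "F x = Red \<longleftrightarrow> x $ 2 < 0 \<and> x $ 1 \<le> dstar (x $ 2)"
  by (simp add: F_def not_le)

lemma xs_nat_fam_comb:
  "xs_nat A C H x0 t0 y (fam_comb u \<delta> \<delta>') n =
   u *\<^sub>R xs_nat A C H x0 t0 y \<delta> n + (1 - u) *\<^sub>R xs_nat A C H x0 t0 y \<delta>' n"
proof (induction n)
  case 0
  show ?case by (simp flip: scaleR_add_left)
next
  case (Suc n)
  show ?case
    unfolding xs_nat.simps Suc
    by (simp add: fam_comb_def matrix_vector_right_distrib matrix_vector_mult_scaleR algebra_simps)
qed

lemma xtil_fam_comb:
  "xtil A C H x0 t0 y (fam_comb u \<delta> \<delta>') t =
   u *\<^sub>R xtil A C H x0 t0 y \<delta> t + (1 - u) *\<^sub>R xtil A C H x0 t0 y \<delta>' t"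
  unfolding xtil_def by (rule xs_nat_fam_comb)

lemma convex_on_quadratic_form:
  fixes f :: "'a::real_inner \<Rightarrow> 'a"
  assumes "linear f" and nonneg: "\<And>z. 0 \<le> z \<bullet> f z"
  shows "convex_on UNIV (\<lambda>z. z \<bullet> f z)"
  unfolding convex_on_def
proof (intro conjI convex_UNIV ballI allI impI)
  interpret f: linear f by fact
  fix x y :: 'a and u v :: real
  assume "0 \<le> u" "0 \<le> v" "u + v = 1"
  have expand: "(u *\<^sub>R x + v *\<^sub>R y) \<bullet> f (u *\<^sub>R x + v *\<^sub>R y)
      = u * u * (x \<bullet> f x) + u * v * (x \<bullet> f y + y \<bullet> f x) + v * v * (y \<bullet> f y)"
    by (simp add: f.add f.scaleR inner_add_left inner_add_right algebra_simps)
  have "(x - y) \<bullet> f (x - y) = x \<bullet> f x - (x \<bullet> f y + y \<bullet> f x) + y \<bullet> f y"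
    by (simp add: f.diff inner_diff_left inner_diff_right)
  moreover have "u * a + v * c - (u * u * a + u * v * b + v * v * c) = u * v * (a - b + c)"
    for a b c :: real
    using \<open>u + v = 1\<close> by (simp add: algebra_simps flip: eq_diff_eq)
  ultimately have "u * (x \<bullet> f x) + v * (y \<bullet> f y) - (u *\<^sub>R x + v *\<^sub>R y) \<bullet> f (u *\<^sub>R x + v *\<^sub>R y)
      = u * v * ((x - y) \<bullet> f (x - y))"
    unfolding expand by simp
  moreover have "0 \<le> u * v * ((x - y) \<bullet> f (x - y))"
    using \<open>0 \<le> u\<close> \<open>0 \<le> v\<close> nonneg by simp
  ultimately show "(u *\<^sub>R x + v *\<^sub>R y) \<bullet> f (u *\<^sub>R x + v *\<^sub>R y) \<le> u * (x \<bullet> f x) + v * (y \<bullet> f y)"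
    by linarith
qed

lemma convex_on_infnorm: "convex_on UNIV infnorm"
  unfolding convex_on_def
proof (intro conjI convex_UNIV ballI allI impI)
  fix x y :: 'a and u v :: real
  assume "0 \<le> u" "0 \<le> v"
  then show "infnorm (u *\<^sub>R x + v *\<^sub>R y) \<le> u * infnorm x + v * infnorm y"
    using infnorm_triangle[of "u *\<^sub>R x" "v *\<^sub>R y"] by (simp add: infnorm_mul)
qed

lemma convex_ereal_sublevel:
  assumes "convex_on UNIV f"
  shows "convex {x. ereal (f x) \<le> c}"
proof (cases c)
  case (real r)
  show ?thesis
  proof (rule convexI)
    fix x y and u v :: real
    assume "x \<in> {x. ereal (f x) \<le> c}" "y \<in> {x. ereal (f x) \<le> c}"
      and uv: "0 \<le> u" "0 \<le> v" "u + v = 1"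
    then have "u * f x + v * f y \<le> u * r + v * r"
      using real by (intro add_mono mult_left_mono) auto
    moreover have "f (u *\<^sub>R x + v *\<^sub>R y) \<le> u * f x + v * f y"
      using assms uv by (simp add: convex_on_def)
    ultimately show "u *\<^sub>R x + v *\<^sub>R y \<in> {x. ereal (f x) \<le> c}"
      using real uv by (simp add: distrib_right[symmetric])
  qed
qed simp_all

lemma convex_component_vimage:
  fixes S :: "real set"
  assumes "convex S"
  shows "convex {x::real^'n. x $ i \<in> S}"
  using convex_linear_vimage[OF bounded_linear.linear[OF bounded_linear_vec_nth] assms]
  by (simp add: vimage_def)

lemma fam_comb_apply: "fam_comb u \<delta> \<delta>' t = u *\<^sub>R \<delta> t + (1 - u) *\<^sub>R \<delta>' t"
  by (simp add: fam_comb_def)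

lemma convex_fam_pointwise_vimage:
  fixes \<phi> :: "'i \<Rightarrow> (int \<Rightarrow> real^8) \<Rightarrow> 'a::real_vector"
  assumes affine: "\<And>i u \<delta> \<delta>'. \<phi> i (fam_comb u \<delta> \<delta>') = u *\<^sub>R \<phi> i \<delta> + (1 - u) *\<^sub>R \<phi> i \<delta>'"
    and convex: "\<And>i. convex (K i)"
  shows "convex_fam {\<delta>. \<forall>i. \<phi> i \<delta> \<in> K i}"
  unfolding convex_fam_def mem_Collect_eq
proof (intro ballI allI impI)
  fix \<delta> \<delta>' :: "int \<Rightarrow> real^8" and u :: real and i
  assume "\<delta> \<in> {\<delta>. \<forall>i. \<phi> i \<delta> \<in> K i}" "\<delta>' \<in> {\<delta>. \<forall>i. \<phi> i \<delta> \<in> K i}"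
    and "0 \<le> u \<and> u \<le> 1"
  then show "\<phi> i (fam_comb u \<delta> \<delta>') \<in> K i"
    unfolding affine by (intro convexD[OF convex]) auto
qed

lemma convex_on_fam_sum:
  assumes "\<And>t. t \<in> T \<Longrightarrow> convex_on UNIV (f t)"
  shows "convex_on_fam UNIV (\<lambda>\<delta>. \<Sum>t\<in>T. f t (\<delta> t))"
  unfolding convex_on_fam_def convex_fam_def
proof (intro conjI ballI allI impI)
  fix \<delta> \<delta>' :: "int \<Rightarrow> real^8" and u :: real
  assume "0 \<le> u \<and> u \<le> 1"
  then have "f t (fam_comb u \<delta> \<delta>' t) \<le> u * f t (\<delta> t) + (1 - u) * f t (\<delta>' t)" if "t \<in> T" for t
    using assms[OF that] by (simp add: convex_on_def fam_comb_def)
  then have "(\<Sum>t\<in>T. f t (fam_comb u \<delta> \<delta>' t)) \<le> (\<Sum>t\<in>T. u * f t (\<delta> t) + (1 - u) * f t (\<delta>' t))"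
    by (rule sum_mono)
  then show "(\<Sum>t\<in>T. f t (fam_comb u \<delta> \<delta>' t)) \<le> u * (\<Sum>t\<in>T. f t (\<delta> t)) + (1 - u) * (\<Sum>t\<in>T. f t (\<delta>' t))"
    by (simp add: sum.distrib sum_distrib_left)
qed auto

lemma convex_on_fam_cost:
  assumes "\<And>z. 0 \<le> z \<bullet> (R *v z)"
  shows "convex_on_fam UNIV (cost R t0 t1)"
proof -
  have eq: "cost R t0 t1 = (\<lambda>\<delta>. \<Sum>t\<in>{t0..t1}. \<delta> t \<bullet> (R *v \<delta> t))"
    by (simp add: fun_eq_iff cost_def)
  show ?thesis
    unfolding eq
    by (rule convex_on_fam_sum) (rule convex_on_quadratic_form[OF matrix_vector_mul_linear assms])
qed

definition admissible_attack :: "real^8 \<Rightarrow> ereal \<Rightarrow> (real^8) set" where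
  "admissible_attack yt \<Delta> =
     {z. (\<forall>i\<in>{5,6,7,8}. z $ i = 0) \<and> ereal (infnorm z) \<le> \<Delta> \<and>
         0 \<le> (yt + z) $ 1 \<and> (yt + z) $ 1 \<le> 75 \<and> -30 \<le> (yt + z) $ 2 \<and> (yt + z) $ 2 \<le> 30}"

lemma convex_admissible_attack: "convex (admissible_attack yt \<Delta>)"
proof -
  have eq: "admissible_attack yt \<Delta> =
      (\<Inter>i\<in>{5,6,7,8}. {z. z $ i \<in> {0}}) \<inter> {z. ereal (infnorm z) \<le> \<Delta>} \<inter>
      {z. z $ 1 \<in> {- yt $ 1..75 - yt $ 1}} \<inter> {z. z $ 2 \<in> {-30 - yt $ 2..30 - yt $ 2}}"
    unfolding admissible_attack_def by auto
  show ?thesis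
    unfolding eq by (intro convex_Int convex_INT convex_component_vimage convex_ereal_sublevel
        convex_on_infnorm convex_singleton convex_real_interval(5))
qed

lemma convex_red_surrogate: "convex (red_surrogate \<epsilon> d0)"
proof -
  have eq: "red_surrogate \<epsilon> d0 =
      {p. (0, 1) \<bullet> p \<le> - \<epsilon>} \<inter> {p. (- U' d0, 1) \<bullet> p \<le> U d0 - U' d0 * d0 - \<epsilon>}"
    by (auto simp: red_surrogate_def inner_prod_def right_diff_distrib)
  show ?thesis
    unfolding eq by (intro convex_Int convex_halfspace_le)
qed

lemma surrogate_feasible_eq:
  "surrogate_feasible A C H x0 t0 t1 y \<Delta> \<epsilon> d0 =
     {\<delta>. \<forall>t. (\<delta> t, xtil A C H x0 t0 y \<delta> t $ 1, xtil A C H x0 t0 y \<delta> t $ 2)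
              \<in> (if t \<in> {t0..t1} then admissible_attack (y t) \<Delta> \<times> red_surrogate \<epsilon> d0
                 else {0} \<times> UNIV)}"
  by (auto simp: surrogate_feasible_def admissible_attack_def red_surrogate_def)

lemma convex_surrogate_feasible:
  "convex_fam (surrogate_feasible A C H x0 t0 t1 y \<Delta> \<epsilon> d0)"
  unfolding surrogate_feasible_eq
  by (rule convex_fam_pointwise_vimage)
    (simp_all add: xtil_fam_comb fam_comb_apply convex_Times convex_admissible_attack convex_red_surrogate)

theorem proposition1:
  fixes \<epsilon> d0 :: real
    and A :: "real^6^6" and C :: "real^6^8" and H :: "int \<Rightarrow> real^8^6"
    and R :: "real^8^8" and x0 :: "real^6" and y :: "int \<Rightarrow> real^8"
    and t0 t1 :: int and \<Delta> :: ereal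
  assumes eps: "\<epsilon> > 0" and d0: "d0 \<ge> 0"
    and interval: "t0 \<le> t1"
    and R_sym: "transpose R = R"
    and R_pos: "\<forall>z::real^8. z \<noteq> 0 \<longrightarrow> z \<bullet> (R *v z) > 0"
    and Delta: "\<Delta> > 0"
  shows "(\<forall>d v. v \<le> - \<epsilon> \<and> v \<le> U' d0 * (d - d0) + U d0 - \<epsilon> \<longrightarrow>
            (v < 0 \<and> d \<le> -1.2 * v + v^2 / (0.8 * g)) \<and>
            (\<forall>x::real^6. x $ 1 = d \<and> x $ 2 = v \<longrightarrow> F x = Red))
       \<and> convex_problem (cost R t0 t1) (surrogate_feasible A C H x0 t0 t1 y \<Delta> \<epsilon> d0)"
proof -
  have radicand: "0 < (0.48 * g)^2 + 0.8 * g * d0"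
    using d0 by (simp add: g_def power2_eq_square)
  have psd: "0 \<le> z \<bullet> (R *v z)" for z
    using R_pos by (cases "z = 0") (auto intro: less_imp_le)
  have "(v < 0 \<and> d \<le> -1.2 * v + v^2 / (0.8 * g)) \<and>
        (\<forall>x::real^6. x $ 1 = d \<and> x $ 2 = v \<longrightarrow> F x = Red)"
    if "v \<le> - \<epsilon> \<and> v \<le> U' d0 * (d - d0) + U d0 - \<epsilon>" for d v
  proof -
    have "v < 0 \<and> d \<le> dstar v"
      using red_surrogate_imp_red_region[OF eps radicand, of d v] that by (simp add: red_surrogate_def)
    then show ?thesis
      by (auto simp: F_eq_Red_iff dstar_def)
  qed
  moreover have "convex_problem (cost R t0 t1) (surrogate_feasible A C H x0 t0 t1 y \<Delta> \<epsilon> d0)"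
    unfolding convex_problem_def using convex_on_fam_cost[OF psd] convex_surrogate_feasible by blast
  ultimately show ?thesis
    by blast
qed

end
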